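(* Let $b>0$ and let $h,k\in\mathbb{R}$ satisfy $k\geqslant 4bh-b^2$ and $k\geqslant 2b$. Consider a point $(\mathbf{s},\mathbf{r})\in\mathcal{P}^4$ lying on the common level set $\{H=h,\ K=k\}$ with $r_3\neq 0$. Put $z=r_3^2$ and $u=s_1^2+s_2^2+b/r_3^2$, and let $x,y$ be the separation variables, i.e. the two roots of $s^2-\frac{2b}{z}s+\left(\frac{2bu}{z}-k\right)=0$, so that $$z=\frac{2b}{x+y},\qquad u=\frac{xy+k}{x+y}.$$ Define the polynomials $$w_1=2b+k-x^2,\quad w_2=2b-k+x^2,\quad w_3=4bh-k-2bx+x^2,$$ $$w_4=2b+k-y^2,\quad w_5=-2b+k-y^2,\quad w_6=-4bh+k+2by-y^2.$$ Then, for an appropriate choice of the branches of the square roots, the phase variables are expressed algebraically in terms of $x,y$ as $$s_1=-\frac{\sqrt{w_2w_5}}{2\sqrt{2b}\sqrt{x+y}},\qquad s_2=\frac{\sqrt{w_1w_4}}{2\sqrt{2b}\sqrt{x+y}},\qquad s_3=\frac{\sqrt{w_1w_2w_6}+\sqrt{w_3w_4w_5}}{2\sqrt{b}\,(x^2-y^2)},$$ $$r_1=\frac{\sqrt{w_2w_3w_4}-\sqrt{w_1w_5w_6}}{2\sqrt{b}\,(x^2-y^2)},\qquad r_2=-\frac{\sqrt{w_2w_4w_6}+\sqrt{w_1w_3w_5}}{2\sqrt{b}\,(x^2-y^2)},\qquad r_3=\sqrt{\frac{2b}{x+y}}.$$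
   Context: Goryachev's integrable case of rigid body dynamics (with the normalization $c=1$). On $\mathbb{R}^6$ with coordinates $\mathbf{s}=(s_1,s_2,s_3)$, $\mathbf{r}=(r_1,r_2,r_3)$, take the Poisson brackets $\{s_i,s_j\}=-\varepsilon_{ijk}s_k$, $\{s_i,r_j\}=-\varepsilon_{ijk}r_k$, $\{r_i,r_j\}=0$, and the Hamiltonian $$H=\tfrac12(s_1^2+s_2^2+2s_3^2)+\tfrac12\Big[(r_1^2-r_2^2)+\frac{b}{r_3^2}\Big],$$ $b$ a real parameter. The equations of motion are $\dot s_1=s_2s_3+r_2r_3-b\,r_2/r_3^3$, $\dot s_2=-s_1s_3+r_1r_3+b\,r_1/r_3^2$, $\dot s_3=-2r_1r_2$, $\dot r_1=2s_3r_2-s_2r_3$, $\dot r_2=-2s_3r_1+s_1r_3$, $\dot r_3=s_2r_1-s_1r_2$. The Casimir functions are $\Gamma=r_1^2+r_2^2+r_3^2$, $L=s_1r_1+s_2r_2+s_3r_3$, and $\mathcal{P}^4=\{(\mathbf{s},\mathbf{r}):\Gamma=1,\ L=0\}$. The additional first integral on $\mathcal{P}^4$ is $$K=\Big(s_1^2+s_2^2+\frac{b}{r_3^2}\Big)^2+2r_3^2(s_1^2-s_2^2)+r_3^4.$$ *)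

theory Defs
  imports Complex_Main
begin

text \<open>Goryachev case, c = 1. Phase point (s1,s2,s3,r1,r2,r3) in R^6.\<close>

definition gor_H :: "real \<Rightarrow> real \<Rightarrow> real \<Rightarrow> real \<Rightarrow> real \<Rightarrow> real \<Rightarrow> real \<Rightarrow> real" where
  "gor_H b s1 s2 s3 r1 r2 r3 =
     (s1^2 + s2^2 + 2 * s3^2) / 2 + ((r1^2 - r2^2) + b / r3^2) / 2"

definition gor_K :: "real \<Rightarrow> real \<Rightarrow> real \<Rightarrow> real \<Rightarrow> real \<Rightarrow> real \<Rightarrow> real \<Rightarrow> real" where
  "gor_K b s1 s2 s3 r1 r2 r3 =
     (s1^2 + s2^2 + b / r3^2)^2 + 2 * r3^2 * (s1^2 - s2^2) + r3^4"

definition gor_Gamma :: "real \<Rightarrow> real \<Rightarrow> real \<Rightarrow> real" where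
  "gor_Gamma r1 r2 r3 = r1^2 + r2^2 + r3^2"

definition gor_L :: "real \<Rightarrow> real \<Rightarrow> real \<Rightarrow> real \<Rightarrow> real \<Rightarrow> real \<Rightarrow> real" where
  "gor_L s1 s2 s3 r1 r2 r3 = s1 * r1 + s2 * r2 + s3 * r3"

definition sqrt_branch :: "real \<Rightarrow> real \<Rightarrow> bool" where
  "sqrt_branch q a \<longleftrightarrow> q = sqrt a \<or> q = - sqrt a"

end

theory Submission
  imports Defs
begin

(*
  Put z = r3^2, v = b/z and u = s1^2 + s2^2 + v.  The separation variables x, y are the
  two distinct roots of  s^2 - 2 v s + (2 v u - k) = 0,  so by Vieta
      x + y = 2 v,        x y = 2 v u - k.
  Together with b = z v these turn Gamma = 1, L = 0, H = h and K = k into polynomial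
  relations, and modulo these relations
      8 b (x+y) s1^2 = w2 w5,        8 b (x+y) s2^2 = w1 w4,
      b (x+y)^2 (s3 (x-y) + A3)^2 = w1 w2 w6,   b (x+y)^2 (s3 (x-y) - A3)^2 = w3 w4 w5,
  and similarly for r1 (with w2 w3 w4, w1 w5 w6) and r2 (with w2 w4 w6, w1 w3 w5),
  where A1, A2, A3 are explicit cubic polynomials in (s, r).  These are ideal-membership
  facts, proved by Groebner bases ('algebra').  The quantities sqrt b (x+y) (t (x-y) +- A)
  are therefore square-root branches of the stated products, and their sum is
  2 sqrt b (x^2 - y^2) t; this recovers t = s3, r1, r2.

  Nonnegativity of
  the radicands comes for free (they are squares).
*)

lemma sqrt_branch_of_square:
  fixes q a :: real
  assumes "q^2 = a"
  shows "sqrt_branch q a" and "a \<ge> 0"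
proof -
  have "sqrt a = \<bar>q\<bar>" using assms real_sqrt_abs by blast
  then show "sqrt_branch q a" unfolding sqrt_branch_def by (cases "q \<ge> 0") auto
  show "a \<ge> 0" using assms by auto
qed

lemma distinct_roots_vieta:
  fixes p c x y :: "'a::idom"
  assumes x: "x^2 - p * x + c = 0" and y: "y^2 - p * y + c = 0" and "x \<noteq> y"
  shows "x + y = p" and "x * y = c"
proof -
  have "(x - y) * (x + y - p) = 0" using x y by algebra
  then show sum: "x + y = p" using \<open>x \<noteq> y\<close> by simp
  show "x * y = c" using x by (simp flip: sum) (algebra)
qed

text \<open>The two branches \<open>c (x+y) (t (x-y) \<plusminus> A)\<close> into which a value \<open>t\<close> is split;
  whatever \<open>A\<close> is, their sum is \<open>2 c (x^2 - y^2) t\<close>, so \<open>t\<close> is recovered from them.\<close>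
definition split_branch :: "real \<Rightarrow> real \<Rightarrow> real \<Rightarrow> real \<Rightarrow> real \<Rightarrow> real" where
  "split_branch c x y t A = c * (x + y) * (t * (x - y) + A)"

lemma split_branch_square:
  assumes "c^2 = b"
  shows "(split_branch c x y t A)^2 = b * (x + y)^2 * (t * (x - y) + A)^2"
  using assms by (simp add: split_branch_def power_mult_distrib)

lemma recover_from_split:
  assumes "c * (x^2 - y^2) \<noteq> 0"
  shows "t = (split_branch c x y t A + split_branch c x y t (- A)) / (2 * c * (x^2 - y^2))"
proof -
  have "split_branch c x y t A + split_branch c x y t (- A) = t * (2 * c * (x^2 - y^2))"
    by (simp add: split_branch_def algebra_simps power2_eq_square)
  then show ?thesis using assms by simp
qed

context
  fixes b h k s1 s2 s3 r1 r2 r3 x y v :: real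
  assumes Gamma: "r1^2 + r2^2 + r3^2 = 1"
    and L: "s1 * r1 + s2 * r2 + s3 * r3 = 0"
    and b_eq: "b = r3^2 * v"
    and sum_xy: "x + y = 2 * v"
    and prod_xy: "x * y = 2 * v * (s1^2 + s2^2 + v) - k"
    and K: "k = (s1^2 + s2^2 + v)^2 + 2 * r3^2 * (s1^2 - s2^2) + r3^4"
    and H: "2 * h = s1^2 + s2^2 + 2 * s3^2 + r1^2 - r2^2 + v"
begin

text \<open>Here \<open>e\<close> plays the role of \<open>2 \<surd>(2b) \<surd>(x+y)\<close>.\<close>
lemma s1_branch:
  assumes "e^2 = 8 * b * (x + y)" and "e \<noteq> 0"
  shows "\<exists>q. q^2 = (2 * b - k + x^2) * (- 2 * b + k - y^2) \<and> s1 = - q / e"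
proof (intro exI conjI)
  have "8 * b * (x + y) * s1^2 = (2 * b - k + x^2) * (- 2 * b + k - y^2)"
    using Gamma L b_eq sum_xy prod_xy K by algebra
  then show "(- s1 * e)^2 = (2 * b - k + x^2) * (- 2 * b + k - y^2)"
    using assms by (simp add: power_mult_distrib mult_ac)
  show "s1 = - (- s1 * e) / e" using assms by simp
qed

lemma s2_branch:
  assumes "e^2 = 8 * b * (x + y)" and "e \<noteq> 0"
  shows "\<exists>q. q^2 = (2 * b + k - x^2) * (2 * b + k - y^2) \<and> s2 = q / e"
proof (intro exI conjI)
  have "8 * b * (x + y) * s2^2 = (2 * b + k - x^2) * (2 * b + k - y^2)"
    using Gamma L b_eq sum_xy prod_xy K by algebra
  then show "(s2 * e)^2 = (2 * b + k - x^2) * (2 * b + k - y^2)"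
    using assms by (simp add: power_mult_distrib mult_ac)
  show "s2 = s2 * e / e" using assms by simp
qed

text \<open>In the remaining lemmas \<open>c\<close> plays the role of \<open>\<surd>b\<close>; \<open>s3\<close> is split by
  \<open>A3 = -2 s3 (s1^2 + s2^2 + r3^2) - 4 s2 r2 r3\<close>.\<close>
lemma s3_branches:
  assumes c: "c^2 = b" and den: "c * (x^2 - y^2) \<noteq> 0"
  shows "\<exists>q q'. q^2 = (2 * b + k - x^2) * (2 * b - k + x^2) * (- 4 * b * h + k + 2 * b * y - y^2)
     \<and> q'^2 = (4 * b * h - k - 2 * b * x + x^2) * (2 * b + k - y^2) * (- 2 * b + k - y^2)
     \<and> s3 = (q + q') / (2 * c * (x^2 - y^2))"
proof -
  define A where "A = - 2 * s3 * (s1^2 + s2^2 + r3^2) - 4 * s2 * r2 * r3"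
  have "(split_branch c x y s3 A)^2
      = (2 * b + k - x^2) * (2 * b - k + x^2) * (- 4 * b * h + k + 2 * b * y - y^2)"
    and "(split_branch c x y s3 (- A))^2
      = (4 * b * h - k - 2 * b * x + x^2) * (2 * b + k - y^2) * (- 2 * b + k - y^2)"
    unfolding power2_minus split_branch_square[OF c]
    using Gamma L b_eq sum_xy prod_xy K H A_def by algebra+
  moreover have "s3 = (split_branch c x y s3 A + split_branch c x y s3 (- A)) / (2 * c * (x^2 - y^2))"
    by (rule recover_from_split[OF den])
  ultimately show ?thesis by blast
qed

lemma r1_branches:
  assumes c: "c^2 = b" and den: "c * (x^2 - y^2) \<noteq> 0"
  shows "\<exists>q q'. q^2 = (2 * b - k + x^2) * (4 * b * h - k - 2 * b * x + x^2) * (2 * b + k - y^2)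
     \<and> q'^2 = (2 * b + k - x^2) * (- 2 * b + k - y^2) * (- 4 * b * h + k + 2 * b * y - y^2)
     \<and> r1 = (q - q') / (2 * c * (x^2 - y^2))"
proof -
  define A where "A = 2 * r1 * (r3^2 + s1^2 - s2^2) + 4 * s1 * s2 * r2"
  have "(split_branch c x y r1 A)^2
      = (2 * b - k + x^2) * (4 * b * h - k - 2 * b * x + x^2) * (2 * b + k - y^2)"
    and "(- split_branch c x y r1 (- A))^2
      = (2 * b + k - x^2) * (- 2 * b + k - y^2) * (- 4 * b * h + k + 2 * b * y - y^2)"
    unfolding power2_minus split_branch_square[OF c]
    using Gamma L b_eq sum_xy prod_xy K H A_def by algebra+
  moreover have "r1 = (split_branch c x y r1 A - - split_branch c x y r1 (- A)) / (2 * c * (x^2 - y^2))"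
    unfolding diff_minus_eq_add by (rule recover_from_split[OF den])
  ultimately show ?thesis by blast
qed

lemma r2_branches:
  assumes c: "c^2 = b" and den: "c * (x^2 - y^2) \<noteq> 0"
  shows "\<exists>q q'. q^2 = (2 * b - k + x^2) * (2 * b + k - y^2) * (- 4 * b * h + k + 2 * b * y - y^2)
     \<and> q'^2 = (2 * b + k - x^2) * (4 * b * h - k - 2 * b * x + x^2) * (- 2 * b + k - y^2)
     \<and> r2 = - (q + q') / (2 * c * (x^2 - y^2))"
proof -
  define A where "A = 2 * r2 * (r3^2 + s1^2 - s2^2) - 4 * s1 * s2 * r1"
  have "(- split_branch c x y r2 A)^2
      = (2 * b - k + x^2) * (2 * b + k - y^2) * (- 4 * b * h + k + 2 * b * y - y^2)"
    and "(- split_branch c x y r2 (- A))^2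
      = (2 * b + k - x^2) * (4 * b * h - k - 2 * b * x + x^2) * (- 2 * b + k - y^2)"
    unfolding power2_minus split_branch_square[OF c]
    using Gamma L b_eq sum_xy prod_xy K H A_def by algebra+
  moreover have "r2 = - (- split_branch c x y r2 A + - split_branch c x y r2 (- A)) / (2 * c * (x^2 - y^2))"
    unfolding minus_add_distrib minus_minus by (rule recover_from_split[OF den])
  ultimately show ?thesis by blast
qed

end

theorem theorem1:
  fixes b h k s1 s2 s3 r1 r2 r3 x y :: real
  assumes hb: "b > 0"
    and hk1: "k \<ge> 4 * b * h - b^2"
    and hk2: "k \<ge> 2 * b"
    and hGamma: "gor_Gamma r1 r2 r3 = 1"
    and hL: "gor_L s1 s2 s3 r1 r2 r3 = 0"
    and hH: "gor_H b s1 s2 s3 r1 r2 r3 = h"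
    and hK: "gor_K b s1 s2 s3 r1 r2 r3 = k"
    and hr3: "r3 \<noteq> 0"
    and hx: "x^2 - (2 * b / r3^2) * x + (2 * b * (s1^2 + s2^2 + b / r3^2) / r3^2 - k) = 0"
    and hy: "y^2 - (2 * b / r3^2) * y + (2 * b * (s1^2 + s2^2 + b / r3^2) / r3^2 - k) = 0"
    and hxy: "x \<noteq> y"
  shows
    "let w1 = 2 * b + k - x^2;
         w2 = 2 * b - k + x^2;
         w3 = 4 * b * h - k - 2 * b * x + x^2;
         w4 = 2 * b + k - y^2;
         w5 = - 2 * b + k - y^2;
         w6 = - 4 * b * h + k + 2 * b * y - y^2
     in \<exists>q1 q2 q3 q4 q5 q6 q7 q8 q9.
          sqrt_branch q1 (w2 * w5) \<and> sqrt_branch q2 (w1 * w4) \<and>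
          sqrt_branch q3 (w1 * w2 * w6) \<and> sqrt_branch q4 (w3 * w4 * w5) \<and>
          sqrt_branch q5 (w2 * w3 * w4) \<and> sqrt_branch q6 (w1 * w5 * w6) \<and>
          sqrt_branch q7 (w2 * w4 * w6) \<and> sqrt_branch q8 (w1 * w3 * w5) \<and>
          sqrt_branch q9 (2 * b / (x + y)) \<and>
          s1 = - q1 / (2 * sqrt (2 * b) * sqrt (x + y)) \<and>
          s2 = q2 / (2 * sqrt (2 * b) * sqrt (x + y)) \<and>
          s3 = (q3 + q4) / (2 * sqrt b * (x^2 - y^2)) \<and>
          r1 = (q5 - q6) / (2 * sqrt b * (x^2 - y^2)) \<and>
          r2 = - (q7 + q8) / (2 * sqrt b * (x^2 - y^2)) \<and>
          r3 = q9 \<and>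
          w2 * w5 \<ge> 0 \<and> w1 * w4 \<ge> 0 \<and> w1 * w2 * w6 \<ge> 0 \<and> w3 * w4 * w5 \<ge> 0 \<and>
          w2 * w3 * w4 \<ge> 0 \<and> w1 * w5 * w6 \<ge> 0 \<and> w2 * w4 * w6 \<ge> 0 \<and>
          w1 * w3 * w5 \<ge> 0 \<and> x + y > 0"
proof -
  define v where "v = b / r3^2"
  have b_eq: "b = r3^2 * v" using hr3 by (simp add: v_def)
  have sum_xy: "x + y = 2 * v" and prod_xy: "x * y = 2 * v * (s1^2 + s2^2 + v) - k"
    using distinct_roots_vieta[OF hx hy hxy] by (simp_all add: v_def)
  have Gamma: "r1^2 + r2^2 + r3^2 = 1" using hGamma by (simp add: gor_Gamma_def)
  have L: "s1 * r1 + s2 * r2 + s3 * r3 = 0" using hL by (simp add: gor_L_def)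
  have K: "k = (s1^2 + s2^2 + v)^2 + 2 * r3^2 * (s1^2 - s2^2) + r3^4"
    using hK unfolding gor_K_def v_def[symmetric] by simp
  have H: "2 * h = s1^2 + s2^2 + 2 * s3^2 + r1^2 - r2^2 + v"
    using hH unfolding gor_H_def v_def[symmetric] by (simp add: field_simps)
  note level = Gamma L b_eq sum_xy prod_xy K H
  have sum_pos: "x + y > 0" using hb hr3 b_eq sum_xy by (simp add: zero_less_mult_iff)
  have r3_sq: "r3^2 = 2 * b / (x + y)" using b_eq sum_xy sum_pos by (simp add: field_simps)
  have c: "(sqrt b)^2 = b" and den: "sqrt b * (x^2 - y^2) \<noteq> 0"
    using hb hxy sum_pos by (simp_all add: power2_eq_square square_diff_square_factored)
  define e where "e = 2 * sqrt (2 * b) * sqrt (x + y)"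
  have e: "e^2 = 8 * b * (x + y)" "e \<noteq> 0"
    using hb sum_pos by (simp_all add: e_def power_mult_distrib)
  show ?thesis
    unfolding Let_def e_def[symmetric]
    using s1_branch[OF level e] s2_branch[OF level e] s3_branches[OF level c den]
      r1_branches[OF level c den] r2_branches[OF level c den] r3_sq sum_pos
    by (blast intro: sqrt_branch_of_square)
qed

end
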